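(* For every integer $k\ge 1$, $k$ is a local minimum of the negligibility sequence $(p(m))_{m\ge 0}$ if and only if $k$ is a local minimum of the rank sequence $(r(m))_{m\ge0}$.
   Context: Every integer $m\ge 0$ is written in binary as $m=\sum_{k\ge1} m_k 2^{k-1}$ with $m_k\in\{0,1\}$. The rank is $r(m)=\sum_k m_k$ and the negligibility is $p(m)=\sum_k (k+1)m_k$. For a real sequence $(a_m)_{m\ge0}$, an index $k\ge1$ is a local minimum if $a_{k-1}>a_k<a_{k+1}$ (strict inequalities). *)

theory Defs
  imports Complex_Main
begin

text \<open>Binary digit m_k (k >= 1): m = sum_k m_k 2^(k-1).\<close>
definition bdigit :: "nat \<Rightarrow> nat \<Rightarrow> nat" where
  "bdigit m k = (m div 2 ^ (k - 1)) mod 2"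

text \<open>Rank r(m) = sum_{k>=1} m_k (only finitely many nonzero digits).\<close>
definition rank :: "nat \<Rightarrow> nat" where
  "rank m = (\<Sum>k\<in>{k. 1 \<le> k \<and> bdigit m k \<noteq> 0}. bdigit m k)"

definition negl :: "nat \<Rightarrow> nat" where
  "negl m = (\<Sum>k\<in>{k. 1 \<le> k \<and> bdigit m k \<noteq> 0}. (k + 1) * bdigit m k)"

definition local_min :: "(nat \<Rightarrow> real) \<Rightarrow> nat \<Rightarrow> bool" where
  "local_min a k \<longleftrightarrow> 1 \<le> k \<and> a (k - 1) > a k \<and> a k < a (k + 1)"

end

theory Submission
  imports Defs
begin

text \<open>Writing \<open>m = 2q + b\<close> with a bit \<open>b\<close>, one has \<open>r(m) = b + r(q)\<close> and
  \<open>p(m) = 2b + p(q) + r(q)\<close>. Passing to residues mod 4, both sequences weakly increase from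
  \<open>4q + c - 1\<close> to \<open>4q + c\<close> for \<open>c = 1, 2, 3\<close>, so local minima can only occur at multiples
  of 4. Conversely at \<open>k = 4(j + 1)\<close> both neighbours are strictly larger, because the increment
  \<open>j \<mapsto> j + 1\<close> raises \<open>r\<close> by at most 1 and \<open>p + 2r\<close> by at most 4. Hence both sequences
  have exactly the positive multiples of 4 as local minima.\<close>

definition one_positions :: "nat \<Rightarrow> nat set" where
  "one_positions m = {k. 1 \<le> k \<and> bdigit m k \<noteq> 0}"

lemma bdigit_neq_0_iff: "bdigit m k \<noteq> 0 \<longleftrightarrow> bdigit m k = 1"
  unfolding bdigit_def by auto

lemma finite_one_positions: "finite (one_positions m)"
proof -
  have "one_positions m \<subseteq> {1..m}"
  proof
    fix k assume "k \<in> one_positions m"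
    hence k: "1 \<le> k" "m div 2 ^ (k - 1) \<noteq> 0"
      by (auto simp: one_positions_def bdigit_def)
    have "2 ^ (k - 1) \<le> m" using k(2) by (simp add: div_eq_0_iff)
    hence "k - 1 < m" using less_exp less_le_trans by blast
    thus "k \<in> {1..m}" using k(1) by auto
  qed
  thus ?thesis by (rule finite_subset) simp
qed

lemma rank_eq_card: "rank m = card (one_positions m)"
  using bdigit_neq_0_iff by (simp add: rank_def one_positions_def)

lemma negl_eq_sum: "negl m = (\<Sum>k\<in>one_positions m. k + 1)"
  unfolding negl_def one_positions_def[symmetric]
  by (rule sum.cong) (use bdigit_neq_0_iff in \<open>auto simp: one_positions_def\<close>)

lemma one_positions_double_add:
  assumes "b < 2"
  shows "one_positions (2 * q + b) = (if b = 1 then {1} else {}) \<union> Suc ` one_positions q"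
proof (rule set_eqI)
  fix k
  consider "k = 0" | "k = 1" | j where "k = Suc (Suc j)"
    by (metis One_nat_def not0_implies_Suc)
  then show "k \<in> one_positions (2 * q + b) \<longleftrightarrow>
      k \<in> (if b = 1 then {1} else {}) \<union> Suc ` one_positions q"
  proof cases
    case 2
    have "bdigit (2 * q + b) 1 = b" using assms by (simp add: bdigit_def)
    then show ?thesis using 2 assms by (auto simp: one_positions_def)
  next
    case (3 j)
    have "bdigit (2 * q + b) (Suc (Suc j)) = bdigit q (Suc j)"
      using assms by (simp add: bdigit_def div_mult2_eq)
    then show ?thesis using 3 by (auto simp: one_positions_def)
  qed (simp add: one_positions_def)
qed

lemma one_notin_Suc_one_positions: "1 \<notin> Suc ` one_positions q"
  by (auto simp: one_positions_def)

lemma rank_double_add: "b < 2 \<Longrightarrow> rank (2 * q + b) = b + rank q"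
  unfolding rank_eq_card using finite_one_positions[of q] one_notin_Suc_one_positions[of q]
  by (auto simp: one_positions_double_add card_image)

lemma negl_double_add: "b < 2 \<Longrightarrow> negl (2 * q + b) = 2 * b + negl q + rank q"
proof -
  assume b: "b < 2"
  have "(\<Sum>k\<in>Suc ` one_positions q. k + 1) = (\<Sum>k\<in>one_positions q. (k + 1) + 1)"
    by (simp add: sum.reindex)
  also have "\<dots> = negl q + rank q"
    by (simp only: sum.distrib negl_eq_sum rank_eq_card) simp
  finally show ?thesis
    using b finite_one_positions[of q] one_notin_Suc_one_positions[of q]
    by (auto simp: negl_eq_sum one_positions_double_add)
qed

lemma one_positions_0 [simp]: "one_positions 0 = {}"
  by (simp add: one_positions_def bdigit_def)

lemma rank_0 [simp]: "rank 0 = 0"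
  by (simp add: rank_eq_card)

lemma negl_0 [simp]: "negl 0 = 0"
  by (simp add: negl_eq_sum)

lemma rank_double [simp]: "rank (2 * q) = rank q"
  using rank_double_add[of 0 q] by simp

lemma rank_Suc_double [simp]: "rank (Suc (2 * q)) = Suc (rank q)"
  using rank_double_add[of 1 q] by simp

lemma negl_double [simp]: "negl (2 * q) = negl q + rank q"
  using negl_double_add[of 0 q] by simp

lemma negl_Suc_double [simp]: "negl (Suc (2 * q)) = negl q + rank q + 2"
  using negl_double_add[of 1 q] by simp

lemma rank_Suc_0 [simp]: "rank (Suc 0) = 1"
  using rank_Suc_double[of 0] by simp

lemma negl_Suc_0 [simp]: "negl (Suc 0) = 2"
  using negl_Suc_double[of 0] by simp

lemma rank_Suc_le: "rank (Suc m) \<le> Suc (rank m)"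
proof (induction m rule: nat_bit_induct)
  case (odd n)
  have "rank (Suc (Suc (2 * n))) = rank (Suc n)"
    by (metis rank_double mult_Suc_right add_2_eq_Suc)
  then show ?case using odd.IH by simp
qed simp_all

text \<open>The weight \<open>c\<close> is generalised because \<open>negl (2 * x) = negl x + rank x\<close>: the carry
  case \<open>m = 2n + 1\<close> needs the induction hypothesis for \<open>n\<close> with weight \<open>c + 1\<close>.\<close>

lemma negl_rank_Suc_le: "negl (Suc m) + c * rank (Suc m) \<le> negl m + c * rank m + c + 2"
proof (induction m arbitrary: c rule: nat_bit_induct)
  case (odd n)
  have "rank (Suc (Suc (2 * n))) = rank (Suc n)"
       "negl (Suc (Suc (2 * n))) = negl (Suc n) + rank (Suc n)"
    by (metis rank_double negl_double mult_Suc_right add_2_eq_Suc)+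
  then show ?case using odd.IH[of "Suc c"] by simp
qed simp_all

lemma four_mul_add_eq: "4 * q + c = 2 * (2 * q + c div 2) + c mod (2::nat)"
  by simp

lemma rank_four_mul:
  assumes "c < 4"
  shows "rank (4 * q + c) = c div 2 + c mod 2 + rank q"
proof -
  have "rank (4 * q + c) = c mod 2 + rank (2 * q + c div 2)"
    by (subst four_mul_add_eq, rule rank_double_add) simp
  also have "\<dots> = c div 2 + c mod 2 + rank q"
    using assms by (simp add: rank_double_add)
  finally show ?thesis .
qed

lemma negl_four_mul:
  assumes "c < 4"
  shows "negl (4 * q + c) = 2 * (c mod 2) + 3 * (c div 2) + negl q + 2 * rank q"
proof -
  have "negl (4 * q + c) = 2 * (c mod 2) + negl (2 * q + c div 2) + rank (2 * q + c div 2)"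
    by (subst four_mul_add_eq, rule negl_double_add) simp
  also have "\<dots> = 2 * (c mod 2) + 3 * (c div 2) + negl q + 2 * rank q"
    using assms by (simp add: rank_double_add negl_double_add)
  finally show ?thesis .
qed

lemma rank_pred_le:
  assumes "\<not> 4 dvd k"
  shows "rank (k - 1) \<le> rank k"
proof -
  define q c where "q = k div 4" and "c = k mod 4"
  have k: "k = 4 * q + c" and c: "c = 1 \<or> c = 2 \<or> c = 3"
    using assms by (auto simp: q_def c_def dvd_eq_mod_eq_0)
  have "rank (4 * q + (c - 1)) \<le> rank (4 * q + c)"
    using c rank_four_mul[of c q] rank_four_mul[of "c - 1" q] by auto
  moreover have "k - 1 = 4 * q + (c - 1)" using k c by auto
  ultimately show ?thesis using k by simp
qed

lemma negl_pred_le: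
  assumes "\<not> 4 dvd k"
  shows "negl (k - 1) \<le> negl k"
proof -
  define q c where "q = k div 4" and "c = k mod 4"
  have k: "k = 4 * q + c" and c: "c = 1 \<or> c = 2 \<or> c = 3"
    using assms by (auto simp: q_def c_def dvd_eq_mod_eq_0)
  have "negl (4 * q + (c - 1)) \<le> negl (4 * q + c)"
    using c negl_four_mul[of c q] negl_four_mul[of "c - 1" q] by auto
  moreover have "k - 1 = 4 * q + (c - 1)" using k c by auto
  ultimately show ?thesis using k by simp
qed

lemma rank_local_min_four_mul:
  "rank (4 * Suc j) < rank (4 * j + 3) \<and> rank (4 * Suc j) < rank (4 * Suc j + 1)"
  using rank_Suc_le[of j] rank_four_mul[of 0 "Suc j"] rank_four_mul[of 3 j]
    rank_four_mul[of 1 "Suc j"]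
  by simp

lemma negl_local_min_four_mul:
  "negl (4 * Suc j) < negl (4 * j + 3) \<and> negl (4 * Suc j) < negl (4 * Suc j + 1)"
  using negl_rank_Suc_le[of j 2] negl_four_mul[of 0 "Suc j"] negl_four_mul[of 3 j]
    negl_four_mul[of 1 "Suc j"]
  by simp

lemma local_min_iff_four_dvd:
  fixes a :: "nat \<Rightarrow> real"
  assumes pred_le: "\<And>k. \<not> 4 dvd k \<Longrightarrow> a (k - 1) \<le> a k"
    and min_at: "\<And>j. a (4 * Suc j) < a (4 * j + 3) \<and> a (4 * Suc j) < a (4 * Suc j + 1)"
  shows "local_min a k \<longleftrightarrow> k \<noteq> 0 \<and> 4 dvd k"
proof
  assume "local_min a k"
  then show "k \<noteq> 0 \<and> 4 dvd k"
    using pred_le[of k] by (auto simp: local_min_def)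
next
  assume "k \<noteq> 0 \<and> 4 dvd k"
  then obtain j where k: "k = 4 * Suc j"
    by (metis dvd_def mult_0_right not0_implies_Suc)
  then have "k - 1 = 4 * j + 3" by simp
  then show "local_min a k"
    unfolding local_min_def using min_at[of j] by (simp only: k) simp
qed

theorem theorem2:
  fixes k :: nat
  assumes "k \<ge> 1"
  shows "local_min (\<lambda>m. real (negl m)) k \<longleftrightarrow> local_min (\<lambda>m. real (rank m)) k"
proof -
  have "local_min (\<lambda>m. real (negl m)) k \<longleftrightarrow> k \<noteq> 0 \<and> 4 dvd k"
    by (rule local_min_iff_four_dvd)
      (simp_all only: of_nat_le_iff of_nat_less_iff not_False_eq_True
        negl_pred_le negl_local_min_four_mul)
  moreover have "local_min (\<lambda>m. real (rank m)) k \<longleftrightarrow> k \<noteq> 0 \<and> 4 dvd k"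
    by (rule local_min_iff_four_dvd)
      (simp_all only: of_nat_le_iff of_nat_less_iff not_False_eq_True
        rank_pred_le rank_local_min_four_mul)
  ultimately show ?thesis by simp
qed

end
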